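(* Consider the closed-loop system $\Sigma$ described in the context, with Assumptions (A1)–(A4) holding, and with $\eta(s):=\frac{1}{\sqrt m}\rho_1^{-1}\!\big(r\frac{\sigma}{2}\alpha_3(s)\big)$ for some $r\in[0,1)$. Then for any trajectory of $\Sigma$ there exist constants $\beta_1,\beta_2>0$ (depending on the initial state) such that $\|u(t)\|\le\beta_1$ and $\|\dot u(t)\|\le\beta_2$ for all $t\in[t_k,\min\{t_{k+1},t_k+T\})$ and all $k\in\mathbb{N}_0$.
   Context: Plant: $\dot x(t)=f(x(t),u(t),d(t))$ for $t\ge t_0=0$, with $x\in\mathbb{R}^n$, $u\in\mathbb{R}^m$, $d\in\mathbb{R}^q$. Standing assumptions: (A1) there exist $\gamma:\mathbb{R}^n\to\mathbb{R}^m$, a continuously differentiable $V:\mathbb{R}^n\to\mathbb{R}$ and class $\mathcal{K}_\infty$ functions $\alpha_1,\alpha_2,\alpha_3,\rho_1,\rho_2$ with $\alpha_1(\|x\|)\le V(x)\le\alpha_2(\|x\|)$ and $\frac{\partial V}{\partial x}f(x,\gamma(x)+e,d)\le-\alpha_3(\|x\|)+\rho_1(\|e\|)+\rho_2(\|d\|)$ for all $x\in\mathbb{R}^n,e\in\mathbb{R}^m,d\in\mathbb{R}^q$; (A2) $f$ and $\gamma$ are Lipschitz on compact sets, $f(0)=0$, $\gamma(0)=0$; (A3) there is $D\ge0$ with $\|d(t)\|\le D$ for all $t\ge0$; (A4) $\Phi=\{\phi_j:[0,\infty)\to\mathbb{R}\}_{j=0}^p$ consists of continuously differentiable functions, $\phi_0$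 is a nonzero constant, and for a fixed $T>0$ the functions in $\Phi$ are linearly independent on $[0,T]$. Write $\phi(\tau)=[\phi_0(\tau),\dots,\phi_p(\tau)]^\top$ and $g(a,\tau)=a^\top\phi(\tau)$ for $a\in\mathbb{R}^{p+1}$. Control law: for event times $t_0<t_1<\dots$, $u(t_k+\tau)=a(k)^\top\phi(\tau)$ for $\tau\in[0,t_{k+1}-t_k)$, where $a(k)\in\mathbb{R}^{(p+1)\times m}$ has $i$-th column $a_i(k)$. Model: $\hat x$ solves $\dot{\hat x}=f(\hat x,\gamma(\hat x),0)$ on $[t_k,t_k+T]$ with $\hat x(t_k)=x(t_k)$, and $\hat u_i(\tau):=\gamma_i(\hat x(t_k+\tau))$ ($i$-th component). Coefficients: for each $i\in\{1,\dots,m\}$, $a_i(k)$ is the (unique) minimizer over $a\in\mathbb{R}^{p+1}$ of $\int_0^T|g(a,\tau)-\hat u_i(\tau)|^2d\tau$ subject to $|g(a,0)-\hat u_i(0)|\le\eta(\|\hat x(t_k)\|)$, with $\eta(s):=\frac{1}{\sqrt m}\rho_1^{-1}(r\frac{\sigma}{2}\alpha_3(s))$. Event-triggering rule: with $e(t):=u(t)-\gamma(x(t))$, a design parameter $\sigma\in(0,1)$ and $\epsilon:=\alpha_2\big(\alpha_3^{-1}(2\rho_2(D)/\sigma)\big)\ge0$, $t_{k+1}=\min\{t>t_k:\ \rho_1(\|e(t)\|)\ge\frac{\sigma}{2}\alpha_3(\|x(t)\|)\ \text{and}\ V(x(t))\ge\epsilon\}$. The closed-loop system $\Sigma$ is the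 combination of plant, control law, coefficient optimization and triggering rule. Notation: $\epsilon_k:=V(x(t_k))$ for $k\in\mathbb{N}_0$, and $\bar\epsilon:=\max\{\epsilon,\epsilon_0\}$. *)

theory Defs
  imports "HOL-Analysis.Analysis"
begin

definition classKinf :: "(real \<Rightarrow> real) \<Rightarrow> bool" where
  "classKinf \<alpha> \<longleftrightarrow> continuous_on {0..} \<alpha> \<and> \<alpha> 0 = 0 \<and> strict_mono_on {0..} \<alpha>
      \<and> filterlim \<alpha> at_top at_top"

definition Kinv :: "(real \<Rightarrow> real) \<Rightarrow> real \<Rightarrow> real" where
  "Kinv \<alpha> = inv_into {0..} \<alpha>"

definition lipschitz_on_compacts :: "('a::metric_space \<Rightarrow> 'b::metric_space) \<Rightarrow> bool" where
  "lipschitz_on_compacts g \<longleftrightarrow> (\<forall>K. compact K \<longrightarrow> (\<exists>L. L-lipschitz_on K g))"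

end

theory Submission
  imports Defs
begin

text \<open>Wherever \<open>V(x) \<ge> \<epsilon>\<close>, the triggering rule (and, right after an event, the constraint of the
  coefficient optimisation) keeps \<open>\<rho>1(|e|) \<le> \<sigma>/2 \<alpha>3(|x|)\<close>, and the choice of \<open>\<epsilon>\<close> makes
  \<open>\<rho>2(D) \<le> \<sigma>/2 \<alpha>3(|x|)\<close>; so the upper right Dini derivative of \<open>V\<close> along the Caratheodory
  solution is nonpositive there, and \<open>V(x(t\<^sub>k)) \<le> max \<epsilon> (V(x 0))\<close> at every event. The
  disturbance-free model started at \<open>x(t\<^sub>k)\<close> does not increase \<open>V\<close>, hence stays in a fixed ball on
  which \<open>\<gamma>\<close> is bounded by some \<open>G\<close>. Comparing the optimal coefficients with the admissible
  constant fit and using coercivity of the Gram form of \<open>\<phi>\<close> on \<open>[0,T]\<close> bounds all coefficient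
  vectors uniformly in \<open>k\<close>; boundedness of \<open>\<phi>\<close> and \<open>\<phi>'\<close> on \<open>[0,T]\<close> then bounds
  \<open>u\<close> and \<open>u'\<close>.\<close>

section \<open>Class K-infinity functions\<close>

lemma classKinf_strict_mono: "classKinf \<alpha> \<Longrightarrow> strict_mono_on {0..} \<alpha>"
  by (simp only: classKinf_def)

lemma classKinf_mono:
  assumes "classKinf \<alpha>" "0 \<le> a" "a \<le> b"
  shows "\<alpha> a \<le> \<alpha> b"
  using strict_mono_on_leD[OF classKinf_strict_mono[OF assms(1)]] assms(2,3) by simp

lemma classKinf_nonneg:
  assumes "classKinf \<alpha>" "0 \<le> a"
  shows "0 \<le> \<alpha> a"
proof -
  have "\<alpha> 0 = 0" using assms(1) by (simp only: classKinf_def)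
  then show ?thesis using classKinf_mono[OF assms(1) order_refl assms(2)] by simp
qed

lemma classKinf_le_cancel:
  assumes "classKinf \<alpha>" "0 \<le> a" "0 \<le> b" "\<alpha> a \<le> \<alpha> b"
  shows "a \<le> b"
  using strict_mono_on_less[OF classKinf_strict_mono[OF assms(1)], of b a] assms(2-4) by force

lemma classKinf_exceeds:
  assumes "classKinf \<alpha>"
  obtains R where "R \<ge> 0" "\<alpha> R > E"
proof -
  have "eventually (\<lambda>R. \<alpha> R > E) at_top"
    using assms unfolding classKinf_def filterlim_at_top_dense by blast
  then obtain N where "\<forall>R\<ge>N. \<alpha> R > E" unfolding eventually_at_top_linorder by blast
  then show thesis using that[of "max N 0"] by simp
qed

lemma classKinf_Kinv:
  assumes K: "classKinf \<alpha>" and y: "0 \<le> y"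
  shows "0 \<le> Kinv \<alpha> y" "\<alpha> (Kinv \<alpha> y) = y"
proof -
  obtain R where R: "R \<ge> 0" "\<alpha> R > y" using classKinf_exceeds[OF K] .
  have "continuous_on {0..R} \<alpha>"
    using K by (auto simp: classKinf_def intro: continuous_on_subset)
  then have "\<exists>z\<ge>0. z \<le> R \<and> \<alpha> z = y"
    using IVT'[of \<alpha> 0 y R] K R y unfolding classKinf_def by auto
  then have "y \<in> \<alpha> ` {0..}" by auto
  then have "inv_into {0..} \<alpha> y \<in> {0..}" "\<alpha> (inv_into {0..} \<alpha> y) = y"
    by (rule inv_into_into, rule f_inv_into_f)
  then show "0 \<le> Kinv \<alpha> y" "\<alpha> (Kinv \<alpha> y) = y"
    unfolding Kinv_def by auto
qed

section \<open>Upper right Dini derivatives\<close>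

definition upper_right_dini_le :: "(real \<Rightarrow> real) \<Rightarrow> real \<Rightarrow> real \<Rightarrow> bool" where
  "upper_right_dini_le g s K \<longleftrightarrow>
     (\<forall>\<delta>>0. \<exists>h0>0. \<forall>h. 0 < h \<and> h \<le> h0 \<longrightarrow> g (s + h) \<le> g s + (K + \<delta>) * h)"

text \<open>Past the last point where \<open>g\<close> lies below the line \<open>M + \<delta> (t - a)\<close>, \<open>g\<close> would have to grow
  with slope at least \<open>\<delta>\<close>, which the Dini bound (or continuity, where \<open>g < c\<close>) rules out.\<close>

lemma upper_right_dini_linear_bound:
  fixes g :: "real \<Rightarrow> real"
  assumes cont: "continuous_on {a..b} g"
    and dini: "\<And>s. s \<in> {a..<b} \<Longrightarrow> c \<le> g s \<Longrightarrow> upper_right_dini_le g s 0"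
    and M: "c \<le> M" "g a \<le> M"
    and t: "t \<in> {a..b}" and \<delta>: "\<delta> > 0"
  shows "g t \<le> M + \<delta> * (t - a)"
proof (rule ccontr)
  assume above: "\<not> g t \<le> M + \<delta> * (t - a)"
  define \<psi> where "\<psi> = (\<lambda>\<tau>. g \<tau> - \<delta> * (\<tau> - a))"
  define S where "S = {\<tau> \<in> {a..t}. \<psi> \<tau> \<le> M}"
  have "continuous_on {a..t} \<psi>" unfolding \<psi>_def
    by (intro continuous_intros continuous_on_subset[OF cont]) (use t in auto)
  then have "closed S" unfolding S_def
    by (rule continuous_on_closed_Collect_le) auto
  moreover have "a \<in> S" "bdd_above S"
    using t M by (auto simp: S_def \<psi>_def intro: bdd_aboveI[of _ t])
  ultimately have s0S: "Sup S \<in> S" and ub: "\<And>\<tau>. \<tau> \<in> S \<Longrightarrow> \<tau> \<le> Sup S"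
    using closed_contains_Sup cSup_upper by blast+
  define s0 where "s0 = Sup S"
  have s0: "a \<le> s0" "s0 < t" "\<psi> s0 \<le> M"
    using s0S above by (auto simp: S_def \<psi>_def s0_def order.order_iff_strict)
  obtain h where h: "0 < h" "h \<le> t - s0" "\<psi> (s0 + h) \<le> M"
  proof (cases "c \<le> g s0")
    case True
    then obtain h0 where h0: "h0 > 0" "\<forall>h. 0 < h \<and> h \<le> h0 \<longrightarrow> g (s0 + h) \<le> g s0 + \<delta> * h"
      using dini[of s0] s0 t \<delta> unfolding upper_right_dini_le_def by fastforce
    define h where "h = min h0 (t - s0)"
    have h: "0 < h" "h \<le> h0" "h \<le> t - s0" using h0 s0 by (auto simp: h_def)
    then have "\<psi> (s0 + h) \<le> \<psi> s0" using h0(2)[rule_format, of h] by (simp add: \<psi>_def algebra_simps)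
    then show thesis using that[of h] h s0 by simp
  next
    case False
    have "s0 \<in> {a..b}" using s0 t by auto
    with cont False obtain e where e: "e > 0"
        "\<forall>\<tau>\<in>{a..b}. dist \<tau> s0 < e \<longrightarrow> dist (g \<tau>) (g s0) < c - g s0"
      unfolding continuous_on_iff by (metis diff_gt_0_iff_gt not_le)
    define h where "h = min (e/2) (t - s0)"
    have h: "0 < h" "h \<le> t - s0" "s0 + h \<in> {a..b}" "dist (s0 + h) s0 < e"
      using e s0 t by (auto simp: h_def dist_real_def)
    then have "\<bar>g (s0 + h) - g s0\<bar> < c - g s0"
      using e(2) by (simp add: dist_real_def)
    moreover have "0 \<le> \<delta> * (s0 + h - a)" using \<delta> h s0 by simp
    ultimately have "\<psi> (s0 + h) \<le> M" using M by (simp add: \<psi>_def)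
    with h show thesis using that by blast
  qed
  then have "s0 + h \<in> S" using s0 by (auto simp: S_def)
  with ub h show False unfolding s0_def by fastforce
qed

lemma upper_right_dini_bound:
  fixes g :: "real \<Rightarrow> real"
  assumes "continuous_on {a..b} g"
    and "\<And>s. s \<in> {a..<b} \<Longrightarrow> c \<le> g s \<Longrightarrow> upper_right_dini_le g s 0"
    and t: "t \<in> {a..b}"
  shows "g t \<le> max c (g a)"
proof (rule field_le_epsilon)
  fix \<epsilon> :: real assume "\<epsilon> > 0"
  then have "g t \<le> max c (g a) + \<epsilon> / (t - a + 1) * (t - a)"
    using upper_right_dini_linear_bound[OF assms(1,2), where M="max c (g a)" and \<delta>="\<epsilon> / (t - a + 1)"] t
    by simp
  also have "\<dots> \<le> max c (g a) + \<epsilon>"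
    using t \<open>\<epsilon> > 0\<close> by (simp add: field_simps)
  finally show "g t \<le> max c (g a) + \<epsilon>" .
qed

lemma upper_right_dini_of_has_integral:
  fixes x g :: "real \<Rightarrow> 'a::euclidean_space" and V :: "'a \<Rightarrow> real"
  assumes Vd: "(V has_derivative V') (at (x s))" and h1: "0 < h1"
    and sol: "\<And>h. 0 \<le> h \<Longrightarrow> h \<le> h1 \<Longrightarrow> (g has_integral (x (s + h) - x s)) {s..s+h}"
    and bound: "\<And>\<tau>. \<tau> \<in> {s..s+h1} \<Longrightarrow> norm (g \<tau>) \<le> M"
    and slope: "\<And>\<tau>. \<tau> \<in> {s..s+h1} \<Longrightarrow> V' (g \<tau>) \<le> K"
  shows "upper_right_dini_le (\<lambda>t. V (x t)) s K"
  unfolding upper_right_dini_le_def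
proof (intro allI impI)
  fix \<delta> :: real assume \<delta>: "\<delta> > 0"
  have M: "0 \<le> M" using bound[of s] h1 norm_ge_zero[of "g s"] by (simp del: norm_ge_zero)
  have lin: "bounded_linear V'" using Vd by (rule has_derivative_bounded_linear)
  obtain \<rho> where \<rho>: "\<rho> > 0"
    "\<And>z. norm (z - x s) < \<rho> \<Longrightarrow> norm (V z - V (x s) - V' (z - x s)) \<le> \<delta> / (M + 1) * norm (z - x s)"
    using Vd[unfolded has_derivative_at_alt] \<delta> M by (metis add_nonneg_pos divide_pos_pos zero_less_one)
  define h0 where "h0 = min h1 (\<rho> / (M + 1))"
  show "\<exists>h0>0. \<forall>h. 0 < h \<and> h \<le> h0 \<longrightarrow> V (x (s + h)) \<le> V (x s) + (K + \<delta>) * h"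
  proof (intro exI[of _ h0] conjI allI impI)
    show "h0 > 0" using h1 \<rho> M by (simp add: h0_def)
    fix h assume h: "0 < h \<and> h \<le> h0"
    define \<Delta> where "\<Delta> = x (s + h) - x s"
    have I: "(g has_integral \<Delta>) {s..s+h}" using sol h by (simp add: \<Delta>_def h0_def)
    have sub: "{s..s+h} \<subseteq> {s..s+h1}" using h by (auto simp: h0_def)
    have \<Delta>M: "norm \<Delta> \<le> M * h"
      using has_integral_bound_real[OF M _ I] bound sub h by auto
    also have "\<dots> < \<rho>"
      using h M \<rho> by (simp add: h0_def field_simps)
    finally have "V (x (s + h)) - V (x s) - V' \<Delta> \<le> \<delta> / (M + 1) * norm \<Delta>"
      using \<rho>(2)[of "x (s + h)"] by (simp add: \<Delta>_def)
    also have "\<dots> \<le> \<delta> / (M + 1) * (M * h)"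
      using \<Delta>M \<delta> M by (intro mult_left_mono) auto
    also have "\<dots> \<le> \<delta> * h"
      using \<delta> M h by (simp add: field_simps)
    finally have "V (x (s + h)) \<le> V (x s) + V' \<Delta> + \<delta> * h" by simp
    moreover have "V' \<Delta> \<le> K * h"
      using has_integral_le[OF has_integral_linear[OF I lin] has_integral_const_real[of K s "s+h"]]
        slope sub h by (auto simp: o_def mult.commute)
    ultimately show "V (x (s + h)) \<le> V (x s) + (K + \<delta>) * h"
      by (simp add: algebra_simps)
  qed
qed

section \<open>Lyapunov functions along integral solutions\<close>

lemma lipschitz_on_compacts_continuous:
  fixes g :: "'a::euclidean_space \<Rightarrow> 'b::metric_space"
  assumes "lipschitz_on_compacts g"
  shows "continuous_on UNIV g"
proof -
  have "isCont g z" for z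
  proof -
    obtain L where "L-lipschitz_on (cball z 1) g"
      using assms compact_cball[of z 1] unfolding lipschitz_on_compacts_def by blast
    then have "continuous_on (cball z 1) g" by (rule lipschitz_on_continuous_on)
    then show ?thesis by (rule continuous_on_interior) simp
  qed
  then show ?thesis by (simp add: continuous_at_imp_continuous_on)
qed

text \<open>The disturbance argument is the same on both sides of the Lipschitz estimate, since \<open>d\<close>
  is not assumed continuous.\<close>

lemma vector_field_along_curve_bounds:
  fixes f :: "'a::real_normed_vector \<Rightarrow> 'b::real_normed_vector \<Rightarrow> 'c::euclidean_space \<Rightarrow> 'd::real_normed_vector"
    and x :: "real \<Rightarrow> 'a" and U :: "real \<Rightarrow> 'b" and d :: "real \<Rightarrow> 'c"
  assumes lip: "lipschitz_on_compacts (\<lambda>(z, v, w). f z v w)"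
    and cx: "continuous_on {a..b} x" and cU: "continuous_on {a..b} U"
    and dD: "\<And>\<tau>. \<tau> \<in> {a..b} \<Longrightarrow> norm (d \<tau>) \<le> D"
  shows "\<exists>L M. L \<ge> 0 \<and> (\<forall>\<tau>\<in>{a..b}. norm (f (x \<tau>) (U \<tau>) (d \<tau>)) \<le> M) \<and>
    (\<forall>\<tau>\<in>{a..b}. \<forall>\<sigma>\<in>{a..b}.
       norm (f (x \<tau>) (U \<tau>) (d \<tau>) - f (x \<sigma>) (U \<sigma>) (d \<tau>)) \<le> L * (norm (x \<tau> - x \<sigma>) + norm (U \<tau> - U \<sigma>)))"
proof -
  define F where "F = (\<lambda>(z, v, w). f z v w)"
  define C where "C = x ` {a..b} \<times> U ` {a..b} \<times> cball (0::'c) D"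
  have "compact C" unfolding C_def
    by (intro compact_Times compact_continuous_image cx cU compact_Icc compact_cball)
  then obtain L where L: "L-lipschitz_on C F"
    using lip unfolding lipschitz_on_compacts_def F_def by blast
  then have "bounded (F ` C)"
    by (intro compact_imp_bounded compact_continuous_image \<open>compact C\<close> lipschitz_on_continuous_on)
  then obtain M where M: "\<And>p. p \<in> C \<Longrightarrow> norm (F p) \<le> M" by (auto simp: bounded_iff)
  have C: "(x \<tau>, U \<sigma>, d \<rho>) \<in> C" if "\<tau> \<in> {a..b}" "\<sigma> \<in> {a..b}" "\<rho> \<in> {a..b}" for \<tau> \<sigma> \<rho>
    using that dD by (auto simp: C_def)
  have "L \<ge> 0" using L by (rule lipschitz_on_nonneg)
  moreover have "norm (f (x \<tau>) (U \<tau>) (d \<tau>)) \<le> M" if "\<tau> \<in> {a..b}" for \<tau>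
    using M[OF C[OF that that that]] by (simp add: F_def)
  moreover have "norm (f (x \<tau>) (U \<tau>) (d \<tau>) - f (x \<sigma>) (U \<sigma>) (d \<tau>)) \<le> L * (norm (x \<tau> - x \<sigma>) + norm (U \<tau> - U \<sigma>))"
    if \<tau>: "\<tau> \<in> {a..b}" and \<sigma>: "\<sigma> \<in> {a..b}" for \<tau> \<sigma>
  proof -
    have "dist (x \<tau>, U \<tau>, d \<tau>) (x \<sigma>, U \<sigma>, d \<tau>) \<le> norm (x \<tau> - x \<sigma>) + norm (U \<tau> - U \<sigma>)"
      using norm_Pair_le[of "x \<tau> - x \<sigma>" "(U \<tau> - U \<sigma>, 0::'c)"] norm_Pair_le[of "U \<tau> - U \<sigma>" "0::'c"]
      by (simp add: dist_norm)
    then have "L * dist (x \<tau>, U \<tau>, d \<tau>) (x \<sigma>, U \<sigma>, d \<tau>) \<le> L * (norm (x \<tau> - x \<sigma>) + norm (U \<tau> - U \<sigma>))"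
      using lipschitz_on_nonneg[OF L] by (intro mult_left_mono)
    then have "dist (F (x \<tau>, U \<tau>, d \<tau>)) (F (x \<sigma>, U \<sigma>, d \<tau>)) \<le> L * (norm (x \<tau> - x \<sigma>) + norm (U \<tau> - U \<sigma>))"
      using lipschitz_onD[OF L C[OF \<tau> \<tau> \<tau>] C[OF \<sigma> \<sigma> \<tau>]] by linarith
    then show ?thesis by (simp add: F_def dist_norm)
  qed
  ultimately show ?thesis by blast
qed

lemma inner_vector_field_eventually_le:
  fixes f :: "'a::euclidean_space \<Rightarrow> 'b::real_normed_vector \<Rightarrow> 'c::euclidean_space \<Rightarrow> 'a"
    and x :: "real \<Rightarrow> 'a" and U :: "real \<Rightarrow> 'b" and d :: "real \<Rightarrow> 'c"
  assumes lip: "lipschitz_on_compacts (\<lambda>(z, v, w). f z v w)" and h1: "0 < h1"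
    and cx: "continuous_on {s..s+h1} x" and cU: "continuous_on {s..s+h1} U"
    and dD: "\<And>\<tau>. \<tau> \<in> {s..s+h1} \<Longrightarrow> norm (d \<tau>) \<le> D"
    and slope: "\<And>w. norm w \<le> D \<Longrightarrow> c \<bullet> f (x s) (U s) w \<le> K"
    and \<delta>: "\<delta> > 0"
  shows "\<exists>h2>0. h2 \<le> h1 \<and> (\<forall>\<tau>\<in>{s..s+h2}. c \<bullet> f (x \<tau>) (U \<tau>) (d \<tau>) \<le> K + \<delta>)"
proof -
  obtain L where L: "L \<ge> 0"
      and Lip: "\<forall>\<tau>\<in>{s..s+h1}. \<forall>\<sigma>\<in>{s..s+h1}.
        norm (f (x \<tau>) (U \<tau>) (d \<tau>) - f (x \<sigma>) (U \<sigma>) (d \<tau>)) \<le> L * (norm (x \<tau> - x \<sigma>) + norm (U \<tau> - U \<sigma>))"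
    using vector_field_along_curve_bounds[OF lip cx cU, where d=d and D=D, OF dD] by blast
  have s: "s \<in> {s..s+h1}" using h1 by simp
  define \<epsilon> where "\<epsilon> = \<delta> / (norm c * L + 1)"
  have \<epsilon>: "\<epsilon> > 0" using \<delta> L by (simp add: \<epsilon>_def add_nonneg_pos)
  have "continuous_on {s..s+h1} (\<lambda>\<tau>. norm (x \<tau> - x s) + norm (U \<tau> - U s))"
    by (intro continuous_intros cx cU)
  then obtain e where "e > 0" "\<forall>\<tau>\<in>{s..s+h1}. dist \<tau> s < e \<longrightarrow>
      dist (norm (x \<tau> - x s) + norm (U \<tau> - U s)) (norm (x s - x s) + norm (U s - U s)) < \<epsilon>"
    using \<epsilon> s unfolding continuous_on_iff by blast
  then have e: "e > 0"
      "\<And>\<tau>. \<tau> \<in> {s..s+h1} \<Longrightarrow> dist \<tau> s < e \<Longrightarrow> norm (x \<tau> - x s) + norm (U \<tau> - U s) < \<epsilon>"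
    by (auto simp: dist_real_def)
  define h2 where "h2 = min h1 (e / 2)"
  have "c \<bullet> f (x \<tau>) (U \<tau>) (d \<tau>) \<le> K + \<delta>" if \<tau>: "\<tau> \<in> {s..s+h2}" for \<tau>
  proof -
    have \<tau>1: "\<tau> \<in> {s..s+h1}" using \<tau> by (auto simp: h2_def)
    have "c \<bullet> f (x \<tau>) (U \<tau>) (d \<tau>)
          = c \<bullet> f (x s) (U s) (d \<tau>) + c \<bullet> (f (x \<tau>) (U \<tau>) (d \<tau>) - f (x s) (U s) (d \<tau>))"
      by (simp add: inner_diff_right)
    also have "\<dots> \<le> K + norm c * (L * (norm (x \<tau> - x s) + norm (U \<tau> - U s)))"
    proof -
      have "c \<bullet> (f (x \<tau>) (U \<tau>) (d \<tau>) - f (x s) (U s) (d \<tau>))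
            \<le> norm c * norm (f (x \<tau>) (U \<tau>) (d \<tau>) - f (x s) (U s) (d \<tau>))"
        by (rule norm_cauchy_schwarz)
      also have "\<dots> \<le> norm c * (L * (norm (x \<tau> - x s) + norm (U \<tau> - U s)))"
        using Lip \<tau>1 s by (intro mult_left_mono) auto
      finally show ?thesis using slope[OF dD[OF \<tau>1]] by linarith
    qed
    also have "\<dots> \<le> K + norm c * L * \<epsilon>"
    proof -
      have "dist \<tau> s < e" using \<tau> e by (auto simp: h2_def dist_real_def)
      then show ?thesis
        using e(2)[OF \<tau>1] L by (simp add: mult.assoc mult_left_mono)
    qed
    also have "\<dots> \<le> K + \<delta>"
    proof -
      have "norm c * L * \<epsilon> = \<delta> * (norm c * L / (norm c * L + 1))"
        by (simp add: \<epsilon>_def)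
      also have "\<dots> \<le> \<delta>" using \<delta> L by (intro mult_left_le) (auto simp: divide_le_eq_1 add_nonneg_pos)
      finally show ?thesis by simp
    qed
    finally show ?thesis .
  qed
  moreover have "0 < h2" "h2 \<le> h1" using h1 e by (auto simp: h2_def)
  ultimately show ?thesis by blast
qed

lemma lyapunov_upper_right_dini:
  fixes f :: "'a::euclidean_space \<Rightarrow> 'b::real_normed_vector \<Rightarrow> 'c::euclidean_space \<Rightarrow> 'a"
    and x :: "real \<Rightarrow> 'a" and U :: "real \<Rightarrow> 'b" and d :: "real \<Rightarrow> 'c" and V :: "'a \<Rightarrow> real"
  assumes Vd: "(V has_derivative (\<lambda>h. c \<bullet> h)) (at (x s))"
    and lip: "lipschitz_on_compacts (\<lambda>(z, v, w). f z v w)" and h1: "0 < h1"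
    and cx: "continuous_on {s..s+h1} x" and cU: "continuous_on {s..s+h1} U"
    and dD: "\<And>\<tau>. \<tau> \<in> {s..s+h1} \<Longrightarrow> norm (d \<tau>) \<le> D"
    and sol: "\<And>h. 0 \<le> h \<Longrightarrow> h \<le> h1 \<Longrightarrow>
                ((\<lambda>\<tau>. f (x \<tau>) (U \<tau>) (d \<tau>)) has_integral (x (s + h) - x s)) {s..s+h}"
    and slope: "\<And>w. norm w \<le> D \<Longrightarrow> c \<bullet> f (x s) (U s) w \<le> K"
  shows "upper_right_dini_le (\<lambda>t. V (x t)) s K"
  unfolding upper_right_dini_le_def
proof (intro allI impI)
  fix \<delta> :: real assume \<delta>: "\<delta> > 0"
  obtain M where M: "\<forall>\<tau>\<in>{s..s+h1}. norm (f (x \<tau>) (U \<tau>) (d \<tau>)) \<le> M"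
    using vector_field_along_curve_bounds[OF lip cx cU, where d=d and D=D, OF dD] by blast
  have "\<delta> / 2 > 0" using \<delta> by simp
  then obtain h2 where h2: "0 < h2" "h2 \<le> h1"
      and slope2: "\<forall>\<tau>\<in>{s..s+h2}. c \<bullet> f (x \<tau>) (U \<tau>) (d \<tau>) \<le> K + \<delta> / 2"
    using inner_vector_field_eventually_le[OF lip h1 cx cU, where d=d and D=D, OF dD slope] by blast
  have "upper_right_dini_le (\<lambda>t. V (x t)) s (K + \<delta> / 2)"
  proof (rule upper_right_dini_of_has_integral[where x=x and s=s and V=V, OF Vd h2(1)])
    show "((\<lambda>\<tau>. f (x \<tau>) (U \<tau>) (d \<tau>)) has_integral (x (s + h) - x s)) {s..s+h}"
      if "0 \<le> h" "h \<le> h2" for h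
      using sol that h2 by simp
    show "norm (f (x \<tau>) (U \<tau>) (d \<tau>)) \<le> M" if "\<tau> \<in> {s..s+h2}" for \<tau>
      using M that h2 by simp
  qed (use slope2 in blast)
  then obtain h0 where "h0 > 0" "\<forall>h. 0 < h \<and> h \<le> h0 \<longrightarrow> V (x (s + h)) \<le> V (x s) + (K + \<delta> / 2 + \<delta> / 2) * h"
    using \<delta> unfolding upper_right_dini_le_def by (meson half_gt_zero)
  then show "\<exists>h0>0. \<forall>h. 0 < h \<and> h \<le> h0 \<longrightarrow> V (x (s + h)) \<le> V (x s) + (K + \<delta>) * h"
    by (auto simp: add.commute)
qed

lemma integral_equation_increment:
  fixes x G :: "real \<Rightarrow> 'a::euclidean_space"
  assumes sol: "\<And>t. 0 \<le> t \<Longrightarrow> (G has_integral (x t - x 0)) {0..t}" and "0 \<le> s" "0 \<le> h"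
  shows "(G has_integral (x (s + h) - x s)) {s..s+h}"
proof -
  have G: "G integrable_on {s..s+h}"
    using integrable_subinterval_real[OF has_integral_integrable[OF sol[of "s+h"]]] assms by auto
  have "(G has_integral ((x s - x 0) + integral {s..s+h} G)) {0..s+h}"
    using has_integral_combine[OF _ _ sol[of s] integrable_integral[OF G]] assms by auto
  then have "(x s - x 0) + integral {s..s+h} G = x (s + h) - x 0"
    by (rule has_integral_unique) (use sol[of "s+h"] assms in simp)
  then have "integral {s..s+h} G = x (s + h) - x s" by (simp add: algebra_simps)
  with integrable_integral[OF G] show ?thesis by simp
qed

lemma integral_equation_continuous:
  fixes x G :: "real \<Rightarrow> 'a::euclidean_space"
  assumes sol: "\<And>t. 0 \<le> t \<Longrightarrow> (G has_integral (x t - x 0)) {0..t}" and "0 \<le> b"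
  shows "continuous_on {0..b} x"
proof -
  have "continuous_on {0..b} (\<lambda>t. integral {0..t} G)"
    using sol[of b] assms(2) by (intro indefinite_integral_continuous_1) blast
  then have "continuous_on {0..b} (\<lambda>t. x 0 + integral {0..t} G)"
    by (intro continuous_intros)
  moreover have "x 0 + integral {0..t} G = x t" if "t \<in> {0..b}" for t
    using integral_unique[OF sol[of t]] that by simp
  ultimately show ?thesis by (rule continuous_on_eq)
qed

section \<open>Event sequences\<close>

text \<open>\<open>tev k = \<infinity>\<close> encodes that fewer than \<open>k\<close> events occur.\<close>

definition event_sequence :: "(nat \<Rightarrow> ereal) \<Rightarrow> bool" where
  "event_sequence tev \<longleftrightarrow> tev 0 = 0 \<and> (\<forall>k tk. tev k = ereal tk \<longrightarrow> ereal tk < tev (Suc k))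
     \<and> (\<forall>k. tev k = \<infinity> \<longrightarrow> tev (Suc k) = \<infinity>)"

lemma event_sequence_nonneg:
  assumes tev: "event_sequence tev"
  shows "0 \<le> tev k"
proof (induction k)
  case 0
  then show ?case using tev by (simp add: event_sequence_def)
next
  case (Suc k)
  show ?case
  proof (cases "tev k")
    case (real tk)
    then have "ereal tk < tev (Suc k)" using tev by (simp add: event_sequence_def)
    then show ?thesis using Suc real by (metis order.trans less_imp_le)
  qed (use Suc tev in \<open>auto simp: event_sequence_def\<close>)
qed

lemma event_sequence_interval_containing:
  assumes tev: "event_sequence tev" and "tev k = ereal tk" "0 \<le> s" "s < tk"
  shows "\<exists>j tj tj'. tev j = ereal tj \<and> tev (Suc j) = ereal tj' \<and> tj \<le> s \<and> s < tj'"
  using assms(2-)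
proof (induction k arbitrary: tk)
  case 0
  then show ?case using tev by (simp add: event_sequence_def)
next
  case (Suc k)
  obtain tk' where tk': "tev k = ereal tk'" "tk' < tk"
  proof (cases "tev k")
    case (real tk')
    then have "ereal tk' < tev (Suc k)" using tev by (simp add: event_sequence_def)
    then show thesis using that real Suc.prems(1) by simp
  next
    case PInf
    then show thesis using tev Suc.prems(1) by (simp add: event_sequence_def)
  next
    case MInf
    then show thesis using event_sequence_nonneg[OF tev, of k] by simp
  qed
  show ?case
  proof (cases "s < tk'")
    case True
    then show ?thesis using Suc.IH[OF tk'(1) Suc.prems(2)] by blast
  next
    case False
    then show ?thesis using Suc.prems tk'(1) by (intro exI[of _ k] exI[of _ tk'] exI[of _ tk]) auto
  qed
qed

section \<open>Least-squares coefficients\<close>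

lemma integral_square_inner_coercive:
  fixes \<phi> :: "real \<Rightarrow> real^'p"
  assumes ab: "a < b" and c\<phi>: "continuous_on {a..b} \<phi>"
    and indep: "\<And>c. (\<forall>\<tau>\<in>{a..b}. c \<bullet> \<phi> \<tau> = 0) \<Longrightarrow> c = 0"
  obtains \<mu> where "\<mu> > 0" "\<And>c. \<mu> * (norm c)\<^sup>2 \<le> integral {a..b} (\<lambda>\<tau>. (c \<bullet> \<phi> \<tau>)\<^sup>2)"
proof -
  define q where "q c = integral {a..b} (\<lambda>\<tau>. (c \<bullet> \<phi> \<tau>)\<^sup>2)" for c
  have int: "(\<lambda>\<tau>. (c \<bullet> \<phi> \<tau>)\<^sup>2) integrable_on {a..b}" for c
    by (intro integrable_continuous_interval continuous_intros c\<phi>)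
  have int_jl: "(\<lambda>\<tau>. \<phi> \<tau> $ j * \<phi> \<tau> $ l) integrable_on {a..b}" for j l
    by (intro integrable_continuous_interval continuous_intros c\<phi>)
  \<comment> \<open>\<open>q\<close> is a quadratic form (the Gram form of \<open>\<phi>\<close>), hence continuous\<close>
  have "q = (\<lambda>c. \<Sum>j\<in>UNIV. \<Sum>l\<in>UNIV. c$j * c$l * integral {a..b} (\<lambda>\<tau>. \<phi> \<tau> $ j * \<phi> \<tau> $ l))"
  proof (rule ext)
    fix c
    have "(c \<bullet> \<phi> \<tau>)\<^sup>2 = (\<Sum>j\<in>UNIV. \<Sum>l\<in>UNIV. c$j * c$l * (\<phi> \<tau> $ j * \<phi> \<tau> $ l))" for \<tau>
      by (simp add: inner_vec_def power2_eq_square sum_product algebra_simps)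
    moreover have "((\<lambda>\<tau>. \<Sum>j\<in>UNIV. \<Sum>l\<in>UNIV. c$j * c$l * (\<phi> \<tau> $ j * \<phi> \<tau> $ l)) has_integral
        (\<Sum>j\<in>UNIV. \<Sum>l\<in>UNIV. c$j * c$l * integral {a..b} (\<lambda>\<tau>. \<phi> \<tau> $ j * \<phi> \<tau> $ l))) {a..b}"
      by (intro has_integral_sum has_integral_mult_right integrable_integral int_jl) auto
    ultimately show "q c = (\<Sum>j\<in>UNIV. \<Sum>l\<in>UNIV. c$j * c$l * integral {a..b} (\<lambda>\<tau>. \<phi> \<tau> $ j * \<phi> \<tau> $ l))"
      unfolding q_def by (simp add: integral_unique)
  qed
  then have "continuous_on (sphere 0 1) q"
    by (simp only:) (intro continuous_intros)
  moreover have "sphere (0::real^'p) 1 \<noteq> {}" by (simp add: sphere_eq_empty)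
  ultimately obtain c0 where "c0 \<in> sphere 0 1" "\<forall>c\<in>sphere 0 1. q c0 \<le> q c"
    using continuous_attains_inf[OF compact_sphere] by blast
  then have c0: "norm c0 = 1" "\<And>c. norm c = 1 \<Longrightarrow> q c0 \<le> q c" by auto
  have q_nonneg: "q c \<ge> 0" for c
    unfolding q_def by (rule integral_nonneg[OF int]) simp
  have "q c0 \<noteq> 0"
  proof
    assume "q c0 = 0"
    then have "((\<lambda>\<tau>. (c0 \<bullet> \<phi> \<tau>)\<^sup>2) has_integral 0) (cbox a b)"
      using integrable_integral[OF int, of c0] by (simp add: q_def)
    moreover have "continuous_on (cbox a b) (\<lambda>\<tau>. (c0 \<bullet> \<phi> \<tau>)\<^sup>2)"
      using c\<phi> by (simp add: continuous_intros)
    ultimately have "(c0 \<bullet> \<phi> \<tau>)\<^sup>2 = 0" if "\<tau> \<in> {a..b}" for \<tau>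
      using has_integral_0_cbox_imp_0[of a b "\<lambda>\<tau>. (c0 \<bullet> \<phi> \<tau>)\<^sup>2" \<tau>] ab that by simp
    then have "c0 = 0" using indep by simp
    with c0 show False by simp
  qed
  show thesis
  proof (rule that[of "q c0"])
    show "q c0 > 0" using \<open>q c0 \<noteq> 0\<close> q_nonneg[of c0] by simp
    show "q c0 * (norm c)\<^sup>2 \<le> integral {a..b} (\<lambda>\<tau>. (c \<bullet> \<phi> \<tau>)\<^sup>2)" for c
    proof (cases "c = 0")
      case False
      have "q c0 \<le> q ((1 / norm c) *\<^sub>R c)" using False by (intro c0(2)) simp
      also have "\<dots> = q c / (norm c)\<^sup>2" by (simp add: q_def power_mult_distrib power_divide)
      finally show ?thesis using False by (simp add: q_def field_simps)
    qed (simp add: q_nonneg[unfolded q_def])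
  qed
qed

lemma least_squares_coefficient_bound:
  fixes \<phi> :: "real \<Rightarrow> 'a::euclidean_space" and g :: "real \<Rightarrow> real"
  assumes T: "0 \<le> T" and c\<phi>: "continuous_on {0..T} \<phi>" and cg: "continuous_on {0..T} g"
    and G: "\<And>\<tau>. \<tau> \<in> {0..T} \<Longrightarrow> \<bar>g \<tau>\<bar> \<le> G"
    and \<mu>: "\<mu> > 0" "\<And>c. \<mu> * (norm c)\<^sup>2 \<le> integral {0..T} (\<lambda>\<tau>. (c \<bullet> \<phi> \<tau>)\<^sup>2)"
    and b: "\<And>\<tau>. \<tau> \<in> {0..T} \<Longrightarrow> b \<bullet> \<phi> \<tau> = g 0"
    and opt: "integral {0..T} (\<lambda>\<tau>. (a \<bullet> \<phi> \<tau> - g \<tau>)\<^sup>2) \<le> integral {0..T} (\<lambda>\<tau>. (b \<bullet> \<phi> \<tau> - g \<tau>)\<^sup>2)"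
  shows "norm a \<le> sqrt (10 * T * G\<^sup>2 / \<mu>)"
proof -
  have int: "continuous_on {0..T} h \<Longrightarrow> h integrable_on {0..T}" for h :: "real \<Rightarrow> real"
    by (rule integrable_continuous_interval)
  have g_sq: "(g \<tau>)\<^sup>2 \<le> G\<^sup>2" and b_sq: "(b \<bullet> \<phi> \<tau> - g \<tau>)\<^sup>2 \<le> 4 * G\<^sup>2" if "\<tau> \<in> {0..T}" for \<tau>
  proof -
    have "\<bar>g \<tau>\<bar> \<le> \<bar>G\<bar>" "\<bar>b \<bullet> \<phi> \<tau> - g \<tau>\<bar> \<le> \<bar>2 * G\<bar>"
      using G[OF that] G[of 0] b[OF that] T by auto
    then have "(g \<tau>)\<^sup>2 \<le> G\<^sup>2" "(b \<bullet> \<phi> \<tau> - g \<tau>)\<^sup>2 \<le> (2 * G)\<^sup>2"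
      by (simp_all only: abs_le_square_iff)
    then show "(g \<tau>)\<^sup>2 \<le> G\<^sup>2" "(b \<bullet> \<phi> \<tau> - g \<tau>)\<^sup>2 \<le> 4 * G\<^sup>2"
      by (simp_all add: power_mult_distrib)
  qed
  have "\<mu> * (norm a)\<^sup>2 \<le> integral {0..T} (\<lambda>\<tau>. (a \<bullet> \<phi> \<tau>)\<^sup>2)" by (rule \<mu>(2))
  also have "\<dots> \<le> integral {0..T} (\<lambda>\<tau>. 2 * (a \<bullet> \<phi> \<tau> - g \<tau>)\<^sup>2 + 2 * (g \<tau>)\<^sup>2)"
  proof (rule integral_le)
    show "(a \<bullet> \<phi> \<tau>)\<^sup>2 \<le> 2 * (a \<bullet> \<phi> \<tau> - g \<tau>)\<^sup>2 + 2 * (g \<tau>)\<^sup>2" for \<tau>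
      using zero_le_power2[of "a \<bullet> \<phi> \<tau> - 2 * g \<tau>"] by (simp add: power2_eq_square algebra_simps)
  qed (intro int continuous_intros c\<phi> cg)+
  also have "\<dots> = 2 * integral {0..T} (\<lambda>\<tau>. (a \<bullet> \<phi> \<tau> - g \<tau>)\<^sup>2) + 2 * integral {0..T} (\<lambda>\<tau>. (g \<tau>)\<^sup>2)"
    by (simp add: integral_add integral_mult_right int continuous_intros c\<phi> cg)
  also have "\<dots> \<le> 2 * integral {0..T} (\<lambda>\<tau>. 4 * G\<^sup>2) + 2 * integral {0..T} (\<lambda>\<tau>. G\<^sup>2)"
  proof -
    have "integral {0..T} (\<lambda>\<tau>. (b \<bullet> \<phi> \<tau> - g \<tau>)\<^sup>2) \<le> integral {0..T} (\<lambda>\<tau>. 4 * G\<^sup>2)"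
      by (rule integral_le) (auto intro!: int continuous_intros c\<phi> cg b_sq)
    moreover have "integral {0..T} (\<lambda>\<tau>. (g \<tau>)\<^sup>2) \<le> integral {0..T} (\<lambda>\<tau>. G\<^sup>2)"
      by (rule integral_le) (auto intro!: int continuous_intros cg g_sq)
    ultimately show ?thesis using opt by linarith
  qed
  also have "\<dots> = 10 * T * G\<^sup>2" using T by (simp add: power_mult_distrib)
  finally have "(norm a)\<^sup>2 \<le> 10 * T * G\<^sup>2 / \<mu>" using \<mu>(1) by (simp add: field_simps)
  then show ?thesis by (rule real_le_rsqrt)
qed

lemma norm_rows_inner_le:
  fixes A :: "real^'p^'m"
  assumes "\<And>i. norm (A $ i) \<le> c"
  shows "norm (\<chi> i. A $ i \<bullet> v) \<le> real CARD('m) * c * norm v"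
proof -
  have "norm (\<chi> i. A $ i \<bullet> v) \<le> (\<Sum>i\<in>UNIV. \<bar>A $ i \<bullet> v\<bar>)"
    using norm_le_l1_cart[of "\<chi> i. A $ i \<bullet> v"] by simp
  also have "\<dots> \<le> (\<Sum>i\<in>(UNIV::'m set). c * norm v)"
  proof (rule sum_mono)
    fix i
    have "\<bar>A $ i \<bullet> v\<bar> \<le> norm (A $ i) * norm v" by (rule Cauchy_Schwarz_ineq2)
    also have "\<dots> \<le> c * norm v" using assms by (rule mult_right_mono) simp
    finally show "\<bar>A $ i \<bullet> v\<bar> \<le> c * norm v" .
  qed
  finally show ?thesis by simp
qed

lemma rows_inner_shift_has_vector_derivative:
  fixes A :: "real^'p^'m" and \<phi> :: "real \<Rightarrow> real^'p"
  assumes \<phi>': "(\<phi> has_vector_derivative \<phi>') (at (t - t0) within {0..})" and S: "S \<subseteq> {t0..}"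
  shows "((\<lambda>s. \<chi> i. A $ i \<bullet> \<phi> (s - t0)) has_vector_derivative (\<chi> i. A $ i \<bullet> \<phi>')) (at t within S)"
proof -
  have rows: "(\<chi> i. A $ i \<bullet> v) = A *v v" for v :: "real^'p"
    by (simp add: matrix_vector_mult_def inner_vec_def vec_eq_iff)
  have "((\<lambda>s. s - t0) has_vector_derivative 1) (at t within S)"
    by (simp add: has_vector_derivative_diff_const)
  moreover have "(\<phi> has_vector_derivative \<phi>') (at ((\<lambda>s. s - t0) t) within (\<lambda>s. s - t0) ` S)"
    by (rule has_vector_derivative_within_subset[OF \<phi>']) (use S in auto)
  ultimately have "((\<phi> \<circ> (\<lambda>s. s - t0)) has_vector_derivative \<phi>') (at t within S)"
    using vector_diff_chain_within by fastforce
  then show ?thesis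
    unfolding rows using bounded_linear.has_vector_derivative[OF matrix_vector_mul_bounded_linear]
    by (simp add: o_def)
qed

lemma at_within_right_interval_nontrivial:
  fixes t z :: real
  assumes "t < z" "{t..z} \<subseteq> S"
  shows "at t within S \<noteq> bot"
  using assms islimpt_subset[of t "{t..z}" S] by (simp add: trivial_limit_within)

section \<open>The closed loop\<close>

locale event_triggered_loop =
  fixes f :: "real^'n \<Rightarrow> real^'m \<Rightarrow> real^'q \<Rightarrow> real^'n"
    and \<gamma> :: "real^'n \<Rightarrow> real^'m"
    and V :: "real^'n \<Rightarrow> real" and DV :: "real^'n \<Rightarrow> real^'n"
    and \<alpha>1 \<alpha>2 \<alpha>3 \<rho>1 \<rho>2 :: "real \<Rightarrow> real"
    and D T \<sigma> r \<epsilon> :: real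
    and \<phi> d\<phi> :: "real \<Rightarrow> real^'p"
    and \<eta> :: "real \<Rightarrow> real"
    and x :: "real \<Rightarrow> real^'n" and u :: "real \<Rightarrow> real^'m" and d :: "real \<Rightarrow> real^'q"
    and tev :: "nat \<Rightarrow> ereal"
    and a :: "nat \<Rightarrow> real^'p^'m"
    and xh :: "nat \<Rightarrow> real \<Rightarrow> real^'n"
  assumes K: "classKinf \<alpha>1" "classKinf \<alpha>2" "classKinf \<alpha>3" "classKinf \<rho>1" "classKinf \<rho>2"
    and V_deriv: "\<And>z. (V has_derivative (\<lambda>h. DV z \<bullet> h)) (at z)"
    and V_lower: "\<And>z. \<alpha>1 (norm z) \<le> V z" and V_upper: "\<And>z. V z \<le> \<alpha>2 (norm z)"
    and ISS: "\<And>z e w. DV z \<bullet> f z (\<gamma> z + e) w \<le> - \<alpha>3 (norm z) + \<rho>1 (norm e) + \<rho>2 (norm w)"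
    and f_lipschitz: "lipschitz_on_compacts (\<lambda>(z, v, w). f z v w)"
    and \<gamma>_lipschitz: "lipschitz_on_compacts \<gamma>"
    and D: "D \<ge> 0" and d_bound: "\<And>t. t \<ge> 0 \<Longrightarrow> norm (d t) \<le> D"
    and \<phi>_deriv: "\<And>\<tau>. \<tau> \<ge> 0 \<Longrightarrow> (\<phi> has_vector_derivative d\<phi> \<tau>) (at \<tau> within {0..})"
    and d\<phi>_continuous: "continuous_on {0..} d\<phi>"
    and \<phi>_const: "\<exists>j0 c. c \<noteq> 0 \<and> (\<forall>\<tau>\<ge>0. \<phi> \<tau> $ j0 = c)"
    and T: "T > 0" and \<phi>_indep: "\<And>c. \<forall>\<tau>\<in>{0..T}. c \<bullet> \<phi> \<tau> = 0 \<Longrightarrow> c = 0"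
    and \<sigma>: "0 < \<sigma>" "\<sigma> \<le> 1" and r: "0 \<le> r" "r \<le> 1"
    and \<eta>_def: "\<eta> = (\<lambda>s. 1 / sqrt (real CARD('m)) * Kinv \<rho>1 (r * (\<sigma> / 2) * \<alpha>3 s))"
    and \<epsilon>_def: "\<epsilon> = \<alpha>2 (Kinv \<alpha>3 (2 * \<rho>2 D / \<sigma>))"
    and plant: "\<And>t. t \<ge> 0 \<Longrightarrow> ((\<lambda>s. f (x s) (u s) (d s)) has_integral (x t - x 0)) {0..t}"
    and events: "event_sequence tev"
    and control: "\<And>k tk s. tev k = ereal tk \<Longrightarrow> tk \<le> s \<Longrightarrow> ereal s < tev (Suc k) \<Longrightarrow>
                    u s = (\<chi> i. a k $ i \<bullet> \<phi> (s - tk))"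
    and model_init: "\<And>k tk. tev k = ereal tk \<Longrightarrow> xh k 0 = x tk"
    and model_deriv: "\<And>k tk \<tau>. tev k = ereal tk \<Longrightarrow> \<tau> \<in> {0..T} \<Longrightarrow>
                  (xh k has_vector_derivative f (xh k \<tau>) (\<gamma> (xh k \<tau>)) 0) (at \<tau> within {0..T})"
    and coeff_feasible: "\<And>k tk i. tev k = ereal tk \<Longrightarrow>
                  \<bar>a k $ i \<bullet> \<phi> 0 - \<gamma> (xh k 0) $ i\<bar> \<le> \<eta> (norm (xh k 0))"
    and coeff_optimal: "\<And>k tk i b. tev k = ereal tk \<Longrightarrow>
                  \<bar>b \<bullet> \<phi> 0 - \<gamma> (xh k 0) $ i\<bar> \<le> \<eta> (norm (xh k 0)) \<Longrightarrow>
                     integral {0..T} (\<lambda>\<tau>. (a k $ i \<bullet> \<phi> \<tau> - \<gamma> (xh k \<tau>) $ i)\<^sup>2)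
                     \<le> integral {0..T} (\<lambda>\<tau>. (b \<bullet> \<phi> \<tau> - \<gamma> (xh k \<tau>) $ i)\<^sup>2)"
    and no_trigger: "\<And>k tk s. tev k = ereal tk \<Longrightarrow> tk < s \<Longrightarrow> ereal s < tev (Suc k) \<Longrightarrow>
            \<not> (\<rho>1 (norm ((\<chi> i. a k $ i \<bullet> \<phi> (s - tk)) - \<gamma> (x s))) \<ge> \<sigma> / 2 * \<alpha>3 (norm (x s))
               \<and> V (x s) \<ge> \<epsilon>)"
begin

lemma \<phi>_continuous: "continuous_on {0..} \<phi>"
  using \<phi>_deriv by (auto simp: continuous_on_eq_continuous_within intro: has_vector_derivative_continuous)

lemma disturbance_dominated:
  assumes "\<epsilon> \<le> V z"
  shows "\<rho>2 D \<le> \<sigma> / 2 * \<alpha>3 (norm z)"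
proof -
  define \<kappa> where "\<kappa> = Kinv \<alpha>3 (2 * \<rho>2 D / \<sigma>)"
  have \<kappa>: "0 \<le> \<kappa>" "\<alpha>3 \<kappa> = 2 * \<rho>2 D / \<sigma>"
    using classKinf_Kinv[OF K(3)] classKinf_nonneg[OF K(5) D] \<sigma> by (simp_all add: \<kappa>_def)
  have "\<alpha>2 \<kappa> \<le> \<alpha>2 (norm z)"
    using assms V_upper[of z] by (simp add: \<epsilon>_def \<kappa>_def)
  then have "\<alpha>3 \<kappa> \<le> \<alpha>3 (norm z)"
    using classKinf_le_cancel[OF K(2) \<kappa>(1)] classKinf_mono[OF K(3) \<kappa>(1)] by simp
  then show ?thesis using \<kappa>(2) \<sigma> by (simp add: field_simps)
qed

text \<open>The constraint of the coefficient optimisation caps the error at \<open>r\<close> times the triggering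
  threshold, so right after an event the trigger is not active.\<close>

lemma error_at_event:
  assumes "tev k = ereal tk"
  shows "\<rho>1 (norm ((\<chi> i. a k $ i \<bullet> \<phi> 0) - \<gamma> (x tk))) \<le> \<sigma> / 2 * \<alpha>3 (norm (x tk))"
proof -
  define e where "e = (\<chi> i. a k $ i \<bullet> \<phi> 0) - \<gamma> (x tk)"
  define y where "y = r * (\<sigma> / 2) * \<alpha>3 (norm (x tk))"
  have y: "0 \<le> y" using r \<sigma> classKinf_nonneg[OF K(3)] by (simp add: y_def)
  have e_i: "\<bar>e $ i\<bar> \<le> \<eta> (norm (x tk))" for i
    using coeff_feasible[OF assms] model_init[OF assms] by (simp add: e_def)
  have "(\<Sum>i\<in>UNIV. (e $ i)\<^sup>2) \<le> (\<Sum>i\<in>(UNIV::'m set). (\<eta> (norm (x tk)))\<^sup>2)"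
    using e_i by (intro sum_mono) (metis abs_le_square_iff abs_ge_zero abs_of_nonneg order_trans)
  then have "norm e \<le> sqrt (real CARD('m) * (\<eta> (norm (x tk)))\<^sup>2)"
    unfolding norm_vec_def L2_set_def by (intro real_sqrt_le_mono) simp
  also have "\<dots> = Kinv \<rho>1 y"
    using classKinf_Kinv(1)[OF K(4) y] by (simp add: \<eta>_def y_def real_sqrt_mult)
  finally have "\<rho>1 (norm e) \<le> y"
    using classKinf_mono[OF K(4) norm_ge_zero] classKinf_Kinv(2)[OF K(4) y] by metis
  also have "\<dots> \<le> \<sigma> / 2 * \<alpha>3 (norm (x tk))"
    using r \<sigma> classKinf_nonneg[OF K(3)] by (simp add: y_def mult_left_le_one_le)
  finally show ?thesis by (simp add: e_def)
qed


lemma lyapunov_decrease_between_events: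
  assumes tk: "tev k = ereal tk" and s: "tk \<le> s" "ereal s < tev (Suc k)"
    and V: "\<epsilon> \<le> V (x s)" and w: "norm w \<le> D"
  shows "DV (x s) \<bullet> f (x s) (\<chi> i. a k $ i \<bullet> \<phi> (s - tk)) w \<le> 0"
proof -
  define e where "e = (\<chi> i. a k $ i \<bullet> \<phi> (s - tk)) - \<gamma> (x s)"
  have "\<rho>1 (norm e) \<le> \<sigma> / 2 * \<alpha>3 (norm (x s))"
  proof (cases "s = tk")
    case True
    then show ?thesis using error_at_event[OF tk] by (simp add: e_def)
  next
    case False
    then show ?thesis using no_trigger[OF tk _ s(2)] s(1) V by (force simp: e_def)
  qed
  moreover have "\<rho>2 (norm w) \<le> \<sigma> / 2 * \<alpha>3 (norm (x s))"
    using classKinf_mono[OF K(5) norm_ge_zero w] disturbance_dominated[OF V] by linarith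
  moreover have "\<sigma> * \<alpha>3 (norm (x s)) \<le> \<alpha>3 (norm (x s))"
    using \<sigma> classKinf_nonneg[OF K(3) norm_ge_zero] by (intro mult_left_le_one_le) auto
  ultimately show ?thesis
    using ISS[of "x s" e w] by (simp add: e_def)
qed

lemma lyapunov_bounded_at_events:
  assumes tk: "tev k = ereal tk"
  shows "V (x tk) \<le> max \<epsilon> (V (x 0))"
proof -
  have tk0: "0 \<le> tk" using event_sequence_nonneg[OF events, of k] tk by simp
  have "continuous_on UNIV V"
    using V_deriv by (intro continuous_at_imp_continuous_on ballI has_derivative_continuous)
  then have "continuous_on {0..tk} (\<lambda>t. V (x t))"
    by (rule continuous_on_compose2[OF _ integral_equation_continuous[OF plant tk0]]) auto
  moreover have "upper_right_dini_le (\<lambda>t. V (x t)) s 0"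
    if s: "s \<in> {0..<tk}" and V: "\<epsilon> \<le> V (x s)" for s
  proof -
    obtain j tj tj' where j: "tev j = ereal tj" "tev (Suc j) = ereal tj'" "tj \<le> s" "s < tj'"
      using event_sequence_interval_containing[OF events tk, of s] s by auto
    define U where "U \<tau> = (\<chi> i. a j $ i \<bullet> \<phi> (\<tau> - tj))" for \<tau>
    define h1 where "h1 = (tj' - s) / 2"
    have h1: "0 < h1" and on_int: "\<And>\<tau>. \<tau> \<in> {s..s+h1} \<Longrightarrow> tj \<le> \<tau> \<and> \<tau> < tj'"
      using j by (auto simp: h1_def field_simps)
    have u_U: "u \<tau> = U \<tau>" if "\<tau> \<in> {s..s+h1}" for \<tau>
      using control[OF j(1)] on_int[OF that] j(2) by (simp add: U_def)
    show ?thesis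
    proof (rule lyapunov_upper_right_dini[OF V_deriv f_lipschitz h1])
      show "continuous_on {s..s+h1} x"
        by (rule continuous_on_subset[OF integral_equation_continuous[OF plant, of "s + h1"]])
          (use s h1 in auto)
      show "continuous_on {s..s+h1} U"
        unfolding U_def using on_int
        by (intro continuous_intros continuous_on_compose2[OF \<phi>_continuous]) auto
      show "norm (d \<tau>) \<le> D" if "\<tau> \<in> {s..s+h1}" for \<tau>
        using d_bound that s by simp
      show "((\<lambda>\<tau>. f (x \<tau>) (U \<tau>) (d \<tau>)) has_integral (x (s + h) - x s)) {s..s+h}"
        if "0 \<le> h" "h \<le> h1" for h
      proof (rule has_integral_eq)
        show "((\<lambda>\<tau>. f (x \<tau>) (u \<tau>) (d \<tau>)) has_integral (x (s + h) - x s)) {s..s+h}"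
          using integral_equation_increment[OF plant, of s h] s that by simp
        show "f (x \<tau>) (u \<tau>) (d \<tau>) = f (x \<tau>) (U \<tau>) (d \<tau>)" if "\<tau> \<in> {s..s+h}" for \<tau>
          using u_U[of \<tau>] that \<open>h \<le> h1\<close> by simp
      qed
      show "DV (x s) \<bullet> f (x s) (U s) w \<le> 0" if "norm w \<le> D" for w
        using lyapunov_decrease_between_events[OF j(1,3) _ V that] j(2,4) by (simp add: U_def)
    qed
  qed
  ultimately show ?thesis
    using upper_right_dini_bound[of 0 tk "\<lambda>t. V (x t)" \<epsilon> tk] tk0 by simp
qed


lemma model_lyapunov_nonincreasing:
  assumes tk: "tev k = ereal tk" and \<tau>: "\<tau> \<in> {0..T}"
  shows "V (xh k \<tau>) \<le> V (x tk)"
proof -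
  define F where "F \<sigma> = f (xh k \<sigma>) (\<gamma> (xh k \<sigma>)) 0" for \<sigma>
  have "((\<lambda>\<sigma>. V (xh k \<sigma>)) has_derivative (\<lambda>h. h * (DV (xh k \<sigma>) \<bullet> F \<sigma>))) (at \<sigma> within {0..\<tau>})"
    if "\<sigma> \<in> {0..\<tau>}" for \<sigma>
  proof -
    have "(xh k has_vector_derivative F \<sigma>) (at \<sigma> within {0..\<tau>})"
      using model_deriv[OF tk, of \<sigma>] that \<tau> by (auto simp: F_def intro: has_vector_derivative_within_subset)
    from has_derivative_compose[OF this[unfolded has_vector_derivative_def] V_deriv]
    show ?thesis by (simp add: inner_scaleR_right)
  qed
  then obtain \<sigma> where "V (xh k \<tau>) - V (xh k 0) = (\<tau> - 0) * (DV (xh k \<sigma>) \<bullet> F \<sigma>)"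
    using mvt_very_simple[of 0 \<tau> "\<lambda>\<sigma>. V (xh k \<sigma>)" "\<lambda>\<sigma> h. h * (DV (xh k \<sigma>) \<bullet> F \<sigma>)"] \<tau>
    by (metis atLeastAtMost_iff)
  moreover have "DV (xh k \<sigma>) \<bullet> F \<sigma> \<le> 0" for \<sigma>
  proof -
    have "\<rho>1 (norm 0) = 0" "\<rho>2 (norm 0) = 0" using K(4,5) by (simp_all add: classKinf_def)
    then show ?thesis
      using ISS[of "xh k \<sigma>" 0 0] classKinf_nonneg[OF K(3) norm_ge_zero[of "xh k \<sigma>"]]
      by (simp add: F_def)
  qed
  ultimately show ?thesis
    using \<tau> model_init[OF tk] mult_nonneg_nonpos[of \<tau> "DV (xh k \<sigma>) \<bullet> F \<sigma>"] by simp
qed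

lemma model_state_bounded:
  obtains R where "\<And>k tk \<tau>. tev k = ereal tk \<Longrightarrow> \<tau> \<in> {0..T} \<Longrightarrow> norm (xh k \<tau>) \<le> R"
proof -
  obtain R where R: "R \<ge> 0" "\<alpha>1 R > max \<epsilon> (V (x 0))"
    using classKinf_exceeds[OF K(1)] .
  have bound: "norm (xh k \<tau>) \<le> R" if tk: "tev k = ereal tk" and \<tau>: "\<tau> \<in> {0..T}" for k tk \<tau>
  proof (rule ccontr)
    assume "\<not> norm (xh k \<tau>) \<le> R"
    then have "\<alpha>1 R \<le> V (xh k \<tau>)"
      using classKinf_mono[OF K(1) R(1), of "norm (xh k \<tau>)"] V_lower[of "xh k \<tau>"] by simp
    also have "\<dots> \<le> max \<epsilon> (V (x 0))"
      using model_lyapunov_nonincreasing[OF tk \<tau>] lyapunov_bounded_at_events[OF tk] by simp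
    finally show False using R(2) by simp
  qed
  show thesis by (rule that[OF bound])
qed

lemma coefficients_bounded:
  obtains A where "A \<ge> 0" "\<And>k tk i. tev k = ereal tk \<Longrightarrow> norm (a k $ i) \<le> A"
proof -
  obtain R where R: "\<And>k tk \<tau>. tev k = ereal tk \<Longrightarrow> \<tau> \<in> {0..T} \<Longrightarrow> norm (xh k \<tau>) \<le> R"
    using model_state_bounded by metis
  have \<gamma>_cont: "continuous_on UNIV \<gamma>" using \<gamma>_lipschitz by (rule lipschitz_on_compacts_continuous)
  then have "bounded (\<gamma> ` cball 0 R)"
    by (intro compact_imp_bounded compact_continuous_image compact_cball) (auto intro: continuous_on_subset)
  then obtain G where G: "\<forall>z\<in>cball 0 R. norm (\<gamma> z) \<le> G" by (auto simp: bounded_iff)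
  have c\<phi>: "continuous_on {0..T} \<phi>" using \<phi>_continuous by (rule continuous_on_subset) auto
  obtain \<mu> where \<mu>: "\<mu> > 0" "\<And>c. \<mu> * (norm c)\<^sup>2 \<le> integral {0..T} (\<lambda>\<tau>. (c \<bullet> \<phi> \<tau>)\<^sup>2)"
    using integral_square_inner_coercive[OF T c\<phi>] \<phi>_indep by blast
  obtain j0 c where c: "c \<noteq> 0" "\<And>\<tau>. \<tau> \<ge> 0 \<Longrightarrow> \<phi> \<tau> $ j0 = c" using \<phi>_const by blast
  have "norm (a k $ i) \<le> sqrt (10 * T * G\<^sup>2 / \<mu>)" if tk: "tev k = ereal tk" for k tk i
  proof (rule least_squares_coefficient_bound[OF _ c\<phi> _ _ \<mu>])
    define g where "g \<tau> = \<gamma> (xh k \<tau>) $ i" for \<tau>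
    \<comment> \<open>the constant function \<open>g 0\<close> is admissible, since it matches the initial value exactly\<close>
    define b :: "real^'p" where "b = (g 0 / c) *\<^sub>R axis j0 1"
    have b: "b \<bullet> \<phi> \<tau> = g 0" if "\<tau> \<in> {0..T}" for \<tau>
      using c that by (simp add: b_def inner_axis')
    have "\<bar>b \<bullet> \<phi> 0 - \<gamma> (xh k 0) $ i\<bar> \<le> \<eta> (norm (xh k 0))"
      using b[of 0] T coeff_feasible[OF tk, of i] by (simp add: g_def)
    then show "integral {0..T} (\<lambda>\<tau>. (a k $ i \<bullet> \<phi> \<tau> - g \<tau>)\<^sup>2) \<le> integral {0..T} (\<lambda>\<tau>. (b \<bullet> \<phi> \<tau> - g \<tau>)\<^sup>2)"
      unfolding g_def by (rule coeff_optimal[OF tk])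
    show "b \<bullet> \<phi> \<tau> = g 0" if "\<tau> \<in> {0..T}" for \<tau> using b that .
    have "continuous_on {0..T} (xh k)"
      by (rule has_derivative_continuous_on)
        (use model_deriv[OF tk] in \<open>auto simp: has_vector_derivative_def\<close>)
    then show "continuous_on {0..T} g"
      unfolding g_def by (intro continuous_intros continuous_on_compose2[OF \<gamma>_cont]) auto
    show "\<bar>g \<tau>\<bar> \<le> G" if "\<tau> \<in> {0..T}" for \<tau>
      using component_le_norm_cart[of "\<gamma> (xh k \<tau>)" i] G R[OF tk that] by (force simp: g_def)
  qed (use T in simp)
  then show thesis using that[of "sqrt (10 * T * G\<^sup>2 / \<mu>)"] \<mu>(1) T by simp
qed

lemma control_derivative:
  assumes tk: "tev k = ereal tk" and t: "tk \<le> t" "ereal t < tev (Suc k)"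
    and w: "(u has_vector_derivative w) (at t within {s. tk \<le> s \<and> ereal s < tev (Suc k)})"
  shows "w = (\<chi> i. a k $ i \<bullet> d\<phi> (t - tk))"
proof (rule vector_derivative_unique_within[OF _ w])
  define S where "S = {s. tk \<le> s \<and> ereal s < tev (Suc k)}"
  obtain z where z: "t < z" "ereal z < tev (Suc k)" using ereal_dense2[OF t(2)] by auto
  then show "at t within S \<noteq> bot"
    using t by (intro at_within_right_interval_nontrivial[of t z]) (auto simp: S_def intro: le_less_trans[OF _ z(2)])
  show "(u has_vector_derivative (\<chi> i. a k $ i \<bullet> d\<phi> (t - tk))) (at t within S)"
  proof (rule has_vector_derivative_transform)
    show "t \<in> S" using t by (simp add: S_def)
    show "u s = (\<chi> i. a k $ i \<bullet> \<phi> (s - tk))" if "s \<in> S" for s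
      using control[OF tk] that by (simp add: S_def)
    show "((\<lambda>s. \<chi> i. a k $ i \<bullet> \<phi> (s - tk)) has_vector_derivative (\<chi> i. a k $ i \<bullet> d\<phi> (t - tk)))
        (at t within S)"
      using t by (intro rows_inner_shift_has_vector_derivative \<phi>_deriv) (auto simp: S_def)
  qed
qed

end

theorem lemma2:
  fixes f :: "real^'n \<Rightarrow> real^'m \<Rightarrow> real^'q \<Rightarrow> real^'n"
    and \<gamma> :: "real^'n \<Rightarrow> real^'m"
    and V :: "real^'n \<Rightarrow> real" and DV :: "real^'n \<Rightarrow> real^'n"
    and \<alpha>1 \<alpha>2 \<alpha>3 \<rho>1 \<rho>2 :: "real \<Rightarrow> real"
    and D T \<sigma> r \<epsilon> :: real
    and \<phi> d\<phi> :: "real \<Rightarrow> real^'p"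
    and \<eta> :: "real \<Rightarrow> real"
    and x :: "real \<Rightarrow> real^'n" and u :: "real \<Rightarrow> real^'m" and d :: "real \<Rightarrow> real^'q"
    and tev :: "nat \<Rightarrow> ereal"
    and a :: "nat \<Rightarrow> real^'p^'m"
    and xh :: "nat \<Rightarrow> real \<Rightarrow> real^'n"
  assumes K: "classKinf \<alpha>1" "classKinf \<alpha>2" "classKinf \<alpha>3" "classKinf \<rho>1" "classKinf \<rho>2"
    and V_C1: "\<forall>z. (V has_derivative (\<lambda>h. DV z \<bullet> h)) (at z)" "continuous_on UNIV DV"
    and V_bounds: "\<forall>z. \<alpha>1 (norm z) \<le> V z \<and> V z \<le> \<alpha>2 (norm z)"
    and A1: "\<forall>z e w. DV z \<bullet> f z (\<gamma> z + e) w
              \<le> - \<alpha>3 (norm z) + \<rho>1 (norm e) + \<rho>2 (norm w)"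
    and A2: "lipschitz_on_compacts (\<lambda>(z, v, w). f z v w)" "lipschitz_on_compacts \<gamma>"
            "f 0 0 0 = 0" "\<gamma> 0 = 0"
    and A3: "D \<ge> 0" "\<forall>t\<ge>0. norm (d t) \<le> D"
    and A4_diff: "\<forall>\<tau>\<ge>0. (\<phi> has_vector_derivative d\<phi> \<tau>) (at \<tau> within {0..})"
                 "continuous_on {0..} d\<phi>"
    and A4_const: "\<exists>j0 c. c \<noteq> 0 \<and> (\<forall>\<tau>\<ge>0. \<phi> \<tau> $ j0 = c)"
    and A4_indep: "T > 0" "\<forall>c. (\<forall>\<tau>\<in>{0..T}. c \<bullet> \<phi> \<tau> = 0) \<longrightarrow> c = 0"
    and sigma: "0 < \<sigma>" "\<sigma> < 1"
    and r: "0 \<le> r" "r < 1"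
    and eta_def: "\<eta> = (\<lambda>s. 1 / sqrt (real CARD('m)) * Kinv \<rho>1 (r * (\<sigma> / 2) * \<alpha>3 s))"
    and eps_def: "\<epsilon> = \<alpha>2 (Kinv \<alpha>3 (2 * \<rho>2 D / \<sigma>))"
    and plant: "\<forall>t\<ge>0. ((\<lambda>s. f (x s) (u s) (d s)) has_integral (x t - x 0)) {0..t}"
    and t0: "tev 0 = 0"
    and t_incr: "\<forall>k tk. tev k = ereal tk \<longrightarrow> ereal tk < tev (Suc k)"
    and t_inf: "\<forall>k. tev k = \<infinity> \<longrightarrow> tev (Suc k) = \<infinity>"
    and control: "\<forall>k tk s. tev k = ereal tk \<longrightarrow> tk \<le> s \<longrightarrow> ereal s < tev (Suc k) \<longrightarrow>
                    u s = (\<chi> i. (a k $ i) \<bullet> \<phi> (s - tk))"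
    \<comment> \<open>model: xh k \<tau> = xhat(t_k + \<tau>)\<close>
    and model: "\<forall>k tk. tev k = ereal tk \<longrightarrow> xh k 0 = x tk \<and>
                  (\<forall>\<tau>\<in>{0..T}. (xh k has_vector_derivative f (xh k \<tau>) (\<gamma> (xh k \<tau>)) 0)
                                  (at \<tau> within {0..T}))"
    and coeff: "\<forall>k tk i. tev k = ereal tk \<longrightarrow>
                  \<bar>(a k $ i) \<bullet> \<phi> 0 - \<gamma> (xh k 0) $ i\<bar> \<le> \<eta> (norm (xh k 0)) \<and>
                  (\<forall>b. \<bar>b \<bullet> \<phi> 0 - \<gamma> (xh k 0) $ i\<bar> \<le> \<eta> (norm (xh k 0)) \<longrightarrow>
                     integral {0..T} (\<lambda>\<tau>. ((a k $ i) \<bullet> \<phi> \<tau> - \<gamma> (xh k \<tau>) $ i)\<^sup>2)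
                     \<le> integral {0..T} (\<lambda>\<tau>. (b \<bullet> \<phi> \<tau> - \<gamma> (xh k \<tau>) $ i)\<^sup>2))"
    and trigger: "\<forall>k tk. tev k = ereal tk \<longrightarrow>
         (\<forall>s. tk < s \<and> ereal s < tev (Suc k) \<longrightarrow>
            \<not> (\<rho>1 (norm ((\<chi> i. (a k $ i) \<bullet> \<phi> (s - tk)) - \<gamma> (x s))) \<ge> \<sigma> / 2 * \<alpha>3 (norm (x s))
               \<and> V (x s) \<ge> \<epsilon>)) \<and>
         (\<forall>s. tev (Suc k) = ereal s \<longrightarrow>
            \<rho>1 (norm ((\<chi> i. (a k $ i) \<bullet> \<phi> (s - tk)) - \<gamma> (x s))) \<ge> \<sigma> / 2 * \<alpha>3 (norm (x s))
               \<and> V (x s) \<ge> \<epsilon>)"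
  shows "\<exists>\<beta>1>0. \<exists>\<beta>2>0. \<forall>k tk t. tev k = ereal tk \<longrightarrow> tk \<le> t \<longrightarrow>
           ereal t < min (tev (Suc k)) (ereal (tk + T)) \<longrightarrow>
           norm (u t) \<le> \<beta>1 \<and>
           (\<forall>w. (u has_vector_derivative w) (at t within {s. tk \<le> s \<and> ereal s < tev (Suc k)})
                  \<longrightarrow> norm w \<le> \<beta>2)"
proof -
  interpret event_triggered_loop f \<gamma> V DV \<alpha>1 \<alpha>2 \<alpha>3 \<rho>1 \<rho>2 D T \<sigma> r \<epsilon> \<phi> d\<phi> \<eta> x u d tev a xh
    using K V_C1(1) V_bounds A1 A2(1,2) A3 A4_diff A4_const A4_indep sigma r eta_def eps_def plant
      t0 t_incr t_inf control model coeff trigger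
    by unfold_locales (auto simp: event_sequence_def)
  obtain A where A: "A \<ge> 0" "\<And>k tk i. tev k = ereal tk \<Longrightarrow> norm (a k $ i) \<le> A"
    using coefficients_bounded by metis
  have "bounded (\<phi> ` {0..T})" "bounded (d\<phi> ` {0..T})"
    using \<phi>_continuous A4_diff(2)
    by (auto intro!: compact_imp_bounded compact_continuous_image intro: continuous_on_subset)
  then obtain \<Phi> d\<Phi> where \<Phi>: "\<forall>\<tau>\<in>{0..T}. norm (\<phi> \<tau>) \<le> \<Phi>" and d\<Phi>: "\<forall>\<tau>\<in>{0..T}. norm (d\<phi> \<tau>) \<le> d\<Phi>"
    and "\<Phi> > 0" "d\<Phi> > 0"
    by (auto simp: bounded_pos)
  define \<beta>1 where "\<beta>1 = real CARD('m) * A * \<Phi> + 1"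
  define \<beta>2 where "\<beta>2 = real CARD('m) * A * d\<Phi> + 1"
  have rows: "norm (\<chi> i. a k $ i \<bullet> v) \<le> real CARD('m) * A * B"
    if "tev k = ereal tk" "norm v \<le> B" for k tk v B
  proof -
    have "norm (\<chi> i. a k $ i \<bullet> v) \<le> real CARD('m) * A * norm v"
      using A(2)[OF that(1)] by (rule norm_rows_inner_le)
    also have "\<dots> \<le> real CARD('m) * A * B"
      using that(2) A(1) by (intro mult_left_mono) auto
    finally show ?thesis .
  qed
  have "\<beta>1 > 0" "\<beta>2 > 0"
    using A(1) \<open>\<Phi> > 0\<close> \<open>d\<Phi> > 0\<close> by (simp_all add: \<beta>1_def \<beta>2_def add_nonneg_pos)
  moreover have "norm (u t) \<le> \<beta>1 \<and>
      (\<forall>w. (u has_vector_derivative w) (at t within {s. tk \<le> s \<and> ereal s < tev (Suc k)}) \<longrightarrow> norm w \<le> \<beta>2)"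
    if tk: "tev k = ereal tk" and t: "tk \<le> t" "ereal t < min (tev (Suc k)) (ereal (tk + T))" for k tk t
  proof -
    have \<tau>: "t - tk \<in> {0..T}" and t': "ereal t < tev (Suc k)" using t by auto
    have "norm (u t) \<le> \<beta>1 - 1"
      using control[OF tk t(1) t'] rows[OF tk] \<Phi> \<tau> by (simp add: \<beta>1_def)
    moreover have "norm w \<le> \<beta>2 - 1"
      if "(u has_vector_derivative w) (at t within {s. tk \<le> s \<and> ereal s < tev (Suc k)})" for w
      using control_derivative[OF tk t(1) t' that] rows[OF tk] d\<Phi> \<tau> by (simp add: \<beta>2_def)
    ultimately show ?thesis by force
  qed
  ultimately show ?thesis by blast
qed

end
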